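(* For every positive integer $n$, \[ p^{(2)}(n) = \sum_{\pi\in\mathcal{D}(n)} (-1)^{\#(\pi)}\, s(\pi)\bigl(\ell(\pi)-s(\pi)\bigr). \]
   Context: $p^{(2)}(n)$ is the number of partitions of $n$ having exactly two distinct part sizes. $\mathcal{D}(n)$ is the set of partitions of $n$ into distinct parts; for a partition $\pi$, $s(\pi)$ is its smallest part, $\ell(\pi)$ its largest part and $\#(\pi)$ its number of parts. *)

theory Defs
  imports Main "HOL-Library.Multiset"
begin

definition partitions :: "nat \<Rightarrow> nat multiset set" where
  "partitions n = {p. (\<forall>x \<in># p. x > 0) \<and> sum_mset p = n}"

definition p2 :: "nat \<Rightarrow> nat" where
  "p2 n = card {p \<in> partitions n. card (set_mset p) = 2}"

definition distinct_partitions :: "nat \<Rightarrow> nat multiset set" where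
  "distinct_partitions n = {p \<in> partitions n. \<forall>x. count p x \<le> 1}"

definition smallest_part :: "nat multiset \<Rightarrow> nat" where
  "smallest_part p = Min (set_mset p)"

definition largest_part :: "nat multiset \<Rightarrow> nat" where
  "largest_part p = Max (set_mset p)"

definition num_parts :: "nat multiset \<Rightarrow> nat" where
  "num_parts p = size p"

end

theory Submission
  imports Defs "HOL-Computational_Algebra.Formal_Power_Series"
begin

text \<open>
  For a partition \<lambda> let u(\<lambda>) be the number of pairs of parts of different sizes and w(\<lambda>) the
  number of pairs of nonempty columns of different heights in its Ferrers diagram. Conjugation
  exchanges the two statistics, so u and w have the same sum over the partitions of any m.
  With P(q) = \<Prod>_j 1/(1 - q^j) these sums are the coefficients of P(q) L(q) and P(q) R(q), where
    L(q) = \<Sum>_{b<a} q^b/(1 - q^b) \<cdot> q^a/(1 - q^a),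
    R(q) = \<Sum>_{r<t} ((q^r; q)_\<infinity> - (q^r; q)_{t-r} - (q^t; q)_\<infinity> + 1),
  the latter by inclusion-exclusion on "some part lies in [r, t) and some part is \<ge> t".
  Cancelling P gives L = R. The coefficient of q^n in L is p^(2)(n); in R a partition \<pi> into
  distinct parts is counted with sign (-1)^#(\<pi>) once for every pair r \<le> s(\<pi>) < t \<le> l(\<pi>),
  that is s(\<pi>)(l(\<pi>) - s(\<pi>)) times. All products are truncated to parts \<le> N, which leaves the
  coefficients of q^m for m \<le> N unchanged.
\<close>

lemma sum_multiples_reindex:
  fixes f :: "nat \<Rightarrow> 'a::comm_monoid_add"
  assumes "j > 0"
  shows "(\<Sum>i=0..n. if j dvd i then f (i div j) else 0) = (\<Sum>k=0..n div j. f k)"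
proof -
  have "{i\<in>{0..n}. j dvd i} = (\<lambda>k. j * k) ` {0..n div j}"
    using assms by (auto simp: image_iff less_eq_div_iff_mult_less_eq mult.commute)
  moreover have "inj_on (\<lambda>k. j * k) {0..n div j}"
    using assms by (auto simp: inj_on_def)
  ultimately show ?thesis
    using assms by (simp add: sum.inter_filter[symmetric] sum.reindex)
qed

lemma prod_of_bool:
  "finite A \<Longrightarrow> (\<Prod>x\<in>A. of_bool (P x) :: 'a::comm_semiring_1) = of_bool (\<forall>x\<in>A. P x)"
  by (induction A rule: finite_induct) auto

lemma sum_mset_eq_sum_count:
  fixes f :: "'a \<Rightarrow> 'b::comm_semiring_1"
  assumes "finite A" "set_mset p \<subseteq> A"
  shows "(\<Sum>x\<in>#p. f x) = (\<Sum>x\<in>A. of_nat (count p x) * f x)"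
  using assms(2)
proof (induction p)
  case (add y p)
  have "A \<inter> {x. x = y} = {y}"
    using add.prems by auto
  then have "(\<Sum>x\<in>A. of_bool (x = y) * f x) = f y"
    using assms(1) by simp
  moreover have "(\<Sum>x\<in>A. of_nat (count (add_mset y p) x) * f x)
      = (\<Sum>x\<in>A. of_nat (count p x) * f x) + (\<Sum>x\<in>A. of_bool (x = y) * f x)"
    by (subst sum.distrib[symmetric]) (intro sum.cong, auto simp: algebra_simps)
  ultimately show ?case
    using add by (simp add: add.commute)
qed simp

lemma size_le_sum_mset: "0 \<notin># p \<Longrightarrow> size p \<le> sum_mset (p :: nat multiset)"
  by (induction p) auto

lemma mem_le_sum_mset: "x \<in># p \<Longrightarrow> x \<le> sum_mset (p :: nat multiset)"
  by (induction p) auto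

lemma sum_mset_image_add:
  "sum_mset (image_mset (\<lambda>x. x + g) q) = sum_mset q + g * size (q :: nat multiset)"
  by (induction q) auto

lemma filter_mset_neq_plus_replicate_mset:
  "filter_mset (\<lambda>x. x \<noteq> j) p + replicate_mset (count p j) j = p"
  by (simp add: multiset_eq_iff)

lemma image_shift_iff:
  "t \<in> (\<lambda>s. s + g) ` A \<longleftrightarrow> g \<le> t \<and> t - g \<in> (A :: nat set)"
  "(r, t) \<in> (\<lambda>(r, t). (r + g, t + g)) ` B
     \<longleftrightarrow> g \<le> r \<and> g \<le> t \<and> (r - g, t - g) \<in> (B :: (nat \<times> nat) set)"
  by (auto simp: image_iff intro: bexI[of _ "t - g"] bexI[of _ "(r - g, t - g)"])

section \<open>Power series in $q^j$\<close>

lemma fps_compose_X_power_nth: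
  assumes "j > 0"
  shows "fps_nth (a oo fps_X ^ j) n = (if j dvd n then fps_nth a (n div j) else 0)"
proof -
  have "n = j * i \<longleftrightarrow> j dvd n \<and> i = n div j" for i
    using assms by auto
  then have "fps_nth (a oo fps_X ^ j) n = (\<Sum>i=0..n. if j dvd n \<and> i = n div j then fps_nth a i else 0)"
    by (simp add: fps_compose_nth power_mult[symmetric] if_distrib cong: if_cong)
  also have "\<dots> = (if j dvd n then fps_nth a (n div j) else 0)"
    by (cases "j dvd n") (simp_all add: sum.delta')
  finally show ?thesis .
qed

lemma fps_compose_X_power_mult_nth:
  fixes a b :: "'a::comm_ring_1 fps"
  assumes "j > 0"
  shows "fps_nth ((a oo fps_X ^ j) * b) n = (\<Sum>k=0..n div j. fps_nth a k * fps_nth b (n - j * k))"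
proof -
  have "fps_nth ((a oo fps_X ^ j) * b) n
      = (\<Sum>i=0..n. if j dvd i then fps_nth a (i div j) * fps_nth b (n - j * (i div j)) else 0)"
    using assms by (auto simp: fps_mult_nth fps_compose_X_power_nth intro!: sum.cong)
  also have "\<dots> = (\<Sum>k=0..n div j. fps_nth a k * fps_nth b (n - j * k))"
    using assms by (rule sum_multiples_reindex)
  finally show ?thesis .
qed

definition geometric :: "'a::comm_ring_1 fps" where
  "geometric = Abs_fps (\<lambda>_. 1)"

lemma fps_nth_geometric [simp]: "fps_nth geometric k = 1"
  by (simp add: geometric_def)

lemma geometric_mult_one_minus_X: "geometric * (1 - fps_X) = (1 :: 'a::comm_ring_1 fps)"
  by (simp add: fps_eq_iff right_diff_distrib mult.commute[of _ fps_X])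

lemma fps_nth_X_mult_geometric: "fps_nth (fps_X * geometric) k = (of_bool (0 < k) :: 'a::comm_ring_1)"
  by simp

lemma fps_nth_geometric_mult_X_mult_geometric:
  "fps_nth (geometric * (fps_X * geometric)) k = (of_nat k :: 'a::comm_ring_1)"
proof -
  have "{0..k} \<inter> {i. 0 < k - i} = {0..<k}"
    by auto
  have "fps_nth (geometric * (fps_X * geometric)) k = (\<Sum>i=0..k. of_bool (0 < k - i) :: 'a)"
    by (subst fps_mult_nth) (simp only: fps_nth_geometric mult_1 fps_nth_X_mult_geometric)
  also have "\<dots> = of_nat (card ({0..k} \<inter> {i. 0 < k - i}))"
    by (rule sum_of_bool_eq) simp_all
  also have "\<dots> = of_nat k"
    using \<open>{0..k} \<inter> {i. 0 < k - i} = {0..<k}\<close> by simp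
  finally show ?thesis .
qed

lemma fps_nth_one_minus_X: "fps_nth (1 - fps_X) k = (of_bool (k \<le> 1) * (-1) ^ k :: 'a::comm_ring_1)"
  by (cases k) auto

lemma fps_nth_eq_cancel_invertible:
  fixes Q U A B :: "'a::comm_ring_1 fps"
  assumes "U * Q = 1" and "\<And>m. m \<le> n \<Longrightarrow> fps_nth (Q * A) m = fps_nth (Q * B) m"
  shows "fps_nth A n = fps_nth B n"
proof -
  have "fps_nth (A - B) n = fps_nth (U * (Q * (A - B))) n"
    using assms(1) by (simp add: mult.assoc[symmetric])
  also have "\<dots> = (\<Sum>i=0..n. fps_nth U i * fps_nth (Q * (A - B)) (n - i))"
    by (rule fps_mult_nth)
  also have "\<dots> = 0"
    using assms(2) by (simp add: right_diff_distrib)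
  finally show ?thesis
    by simp
qed

section \<open>Products indexed by part sizes\<close>

definition partitions_in :: "nat set \<Rightarrow> nat \<Rightarrow> nat multiset set" where
  "partitions_in S m = {p. set_mset p \<subseteq> S \<and> sum_mset p = m}"

lemma finite_partitions_in:
  assumes "finite S" "0 \<notin> S"
  shows "finite (partitions_in S m)"
proof (rule finite_subset)
  show "partitions_in S m \<subseteq> (\<Union>k\<le>m. multisets_of_size S k)"
  proof
    fix p assume p: "p \<in> partitions_in S m"
    with assms(2) have "0 \<notin># p"
      by (auto simp: partitions_in_def)
    with p size_le_sum_mset[of p] show "p \<in> (\<Union>k\<le>m. multisets_of_size S k)"
      by (simp add: partitions_in_def multisets_of_size_def)
  qed
  show "finite (\<Union>k\<le>m. multisets_of_size S k)"
    using assms(1) by (simp add: finite_multisets_of_size)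
qed

lemma partitions_in_atLeastAtMost:
  assumes "m \<le> N"
  shows "partitions_in {1..N} m = partitions m"
  using assms mem_le_sum_mset by (fastforce simp: partitions_in_def partitions_def Suc_le_eq)

lemma set_mset_partition_subset: "p \<in> partitions m \<Longrightarrow> m \<le> N \<Longrightarrow> set_mset p \<subseteq> {1..N}"
  by (metis (no_types, lifting) mem_Collect_eq partitions_in_atLeastAtMost partitions_in_def)

lemma finite_partitions: "finite (partitions n)"
  using finite_partitions_in[of "{1..n}" n] partitions_in_atLeastAtMost[of n n] by simp

lemma bij_betw_partitions_in_insert:
  assumes "j \<notin> S" "j > 0"
  shows "bij_betw (\<lambda>(k, p). p + replicate_mset k j)
           (SIGMA k:{0..m div j}. partitions_in S (m - j * k)) (partitions_in (insert j S) m)"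
proof (rule bij_betw_byWitness[where f' = "\<lambda>p. (count p j, filter_mset (\<lambda>x. x \<noteq> j) p)"])
  show "\<forall>a\<in>SIGMA k:{0..m div j}. partitions_in S (m - j * k).
          (count (case a of (k, p) \<Rightarrow> p + replicate_mset k j) j,
           filter_mset (\<lambda>x. x \<noteq> j) (case a of (k, p) \<Rightarrow> p + replicate_mset k j)) = a"
  proof
    fix a assume "a \<in> (SIGMA k:{0..m div j}. partitions_in S (m - j * k))"
    then obtain k p where a: "a = (k, p)" and "p \<in> partitions_in S (m - j * k)"
      by blast
    then have "count p j = 0" using assms(1) by (auto simp: partitions_in_def count_eq_zero_iff)
    then show "(count (case a of (k, p) \<Rightarrow> p + replicate_mset k j) j,
        filter_mset (\<lambda>x. x \<noteq> j) (case a of (k, p) \<Rightarrow> p + replicate_mset k j)) = a"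
      by (simp add: a multiset_eq_iff)
  qed
  show "\<forall>p\<in>partitions_in (insert j S) m.
          (case (count p j, filter_mset (\<lambda>x. x \<noteq> j) p) of (k, p) \<Rightarrow> p + replicate_mset k j) = p"
    by (simp add: filter_mset_neq_plus_replicate_mset)
  show "(\<lambda>(k, p). p + replicate_mset k j) ` (SIGMA k:{0..m div j}. partitions_in S (m - j * k))
          \<subseteq> partitions_in (insert j S) m"
  proof
    fix x
    assume "x \<in> (\<lambda>(k, p). p + replicate_mset k j) ` (SIGMA k:{0..m div j}. partitions_in S (m - j * k))"
    then obtain k p where x: "x = p + replicate_mset k j" "k \<le> m div j"
      and p: "set_mset p \<subseteq> S" "sum_mset p = m - j * k"
      by (auto simp: partitions_in_def)
    have "j * k \<le> m"
      using x(2) assms(2) by (simp add: less_eq_div_iff_mult_less_eq mult.commute)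
    with x p show "x \<in> partitions_in (insert j S) m"
      by (auto simp: partitions_in_def)
  qed
  show "(\<lambda>p. (count p j, filter_mset (\<lambda>x. x \<noteq> j) p)) ` partitions_in (insert j S) m
          \<subseteq> (SIGMA k:{0..m div j}. partitions_in S (m - j * k))"
  proof (rule image_subsetI)
    fix p assume "p \<in> partitions_in (insert j S) m"
    with arg_cong[OF filter_mset_neq_plus_replicate_mset[of j p], of sum_mset] assms(2)
    show "(count p j, filter_mset (\<lambda>x. x \<noteq> j) p) \<in> (SIGMA k:{0..m div j}. partitions_in S (m - j * k))"
      by (auto simp: partitions_in_def less_eq_div_iff_mult_less_eq mult.commute)
  qed
qed

definition part_product :: "nat set \<Rightarrow> (nat \<Rightarrow> 'a::idom fps) \<Rightarrow> 'a fps" where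
  "part_product S F = (\<Prod>j\<in>S. F j oo fps_X ^ j)"

lemma part_product_nth:
  assumes "finite S" "0 \<notin> S"
  shows "fps_nth (part_product S F) m = (\<Sum>p\<in>partitions_in S m. \<Prod>j\<in>S. fps_nth (F j) (count p j))"
  using assms unfolding part_product_def
proof (induction S arbitrary: m rule: finite_induct)
  case empty
  have "partitions_in {} m = (if m = 0 then {{#}} else {})"
    by (auto simp: partitions_in_def)
  then show ?case by simp
next
  case (insert j S)
  have j: "j > 0" and S: "0 \<notin> S"
    using insert.prems by auto
  let ?w = "\<lambda>S p. \<Prod>i\<in>S. fps_nth (F i) (count p i)"
  have weight_insert: "?w (insert j S) (p + replicate_mset k j) = fps_nth (F j) k * ?w S p"
    if "p \<in> partitions_in S n" for p k n
  proof -
    have "count p j = 0"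
      using that insert.hyps(2) by (auto simp: partitions_in_def count_eq_zero_iff)
    moreover have "?w S (p + replicate_mset k j) = ?w S p"
      using insert.hyps(2) by (intro prod.cong) auto
    ultimately show ?thesis
      using insert.hyps by simp
  qed
  have "fps_nth (\<Prod>i\<in>insert j S. F i oo fps_X ^ i) m
      = (\<Sum>k=0..m div j. fps_nth (F j) k * fps_nth (\<Prod>i\<in>S. F i oo fps_X ^ i) (m - j * k))"
    using insert.hyps j by (simp add: fps_compose_X_power_mult_nth)
  also have "\<dots> = (\<Sum>k=0..m div j. \<Sum>p\<in>partitions_in S (m - j * k). fps_nth (F j) k * ?w S p)"
    using insert.IH[OF S] by (simp add: sum_distrib_left)
  also have "\<dots> = (\<Sum>(k, p)\<in>(SIGMA k:{0..m div j}. partitions_in S (m - j * k)). fps_nth (F j) k * ?w S p)"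
    using finite_partitions_in[OF insert.hyps(1) S] by (simp add: sum.Sigma)
  also have "\<dots> = (\<Sum>(k, p)\<in>(SIGMA k:{0..m div j}. partitions_in S (m - j * k)).
                      ?w (insert j S) (p + replicate_mset k j))"
  proof (intro sum.cong refl, clarify)
    fix k p assume "p \<in> partitions_in S (m - j * k)"
    then show "fps_nth (F j) k * ?w S p = ?w (insert j S) (p + replicate_mset k j)"
      by (simp only: weight_insert)
  qed
  also have "\<dots> = (\<Sum>p\<in>partitions_in (insert j S) m. ?w (insert j S) p)"
    using sum.reindex_bij_betw[OF bij_betw_partitions_in_insert[OF insert.hyps(2) j],
        of "?w (insert j S)"]
    by (simp only: case_prod_unfold)
  finally show ?case .
qed

lemma part_product_mult:
  assumes "0 \<notin> S"
  shows "part_product S F * part_product S G = part_product S (\<lambda>j. F j * G j)"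
proof -
  have "(F j * G j) oo fps_X ^ j = (F j oo fps_X ^ j) * (G j oo fps_X ^ j)" if "j \<in> S" for j
  proof -
    have "0 < j"
      using that assms by (cases j) auto
    then show ?thesis
      by (intro fps_compose_mult_distrib) simp
  qed
  then show ?thesis
    by (simp add: part_product_def prod.distrib[symmetric])
qed

lemma part_product_mult_subset:
  assumes "T \<subseteq> S" "finite S" "0 \<notin> S"
  shows "part_product S F * part_product T G = part_product S (\<lambda>j. F j * (if j \<in> T then G j else 1))"
proof -
  have "part_product T G = part_product S (\<lambda>j. if j \<in> T then G j else 1)"
    unfolding part_product_def using assms(1,2)
    by (intro prod.mono_neutral_cong_left) auto
  with assms(3) show ?thesis
    by (simp add: part_product_mult if_distrib)
qed

lemma part_product_atLeastAtMost_nth: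
  assumes "m \<le> N"
  shows "fps_nth (part_product {1..N} F) m = (\<Sum>p\<in>partitions m. \<Prod>j\<in>{1..N}. fps_nth (F j) (count p j))"
  using part_product_nth[of "{1..N}" F m] partitions_in_atLeastAtMost[OF assms] by simp

section \<open>Conjugation\<close>

definition columns :: "nat multiset \<Rightarrow> nat set" where
  "columns p = {t. 1 \<le> t \<and> (\<exists>x\<in>#p. t \<le> x)}"

(* (r, t) \<in> column_pairs p iff columns r < t of the Ferrers diagram of p are nonempty and of
   different heights. *)
definition column_pairs :: "nat multiset \<Rightarrow> (nat \<times> nat) set" where
  "column_pairs p = {(r, t). 1 \<le> r \<and> r < t \<and> (\<exists>x\<in>#p. r \<le> x \<and> x < t) \<and> (\<exists>x\<in>#p. t \<le> x)}"

definition unequal_part_pairs :: "nat multiset \<Rightarrow> nat" where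
  "unequal_part_pairs p = (\<Sum>x\<in>#p. \<Sum>y\<in>#p. of_bool (x < y))"

lemma finite_columns: "finite (columns p)"
  by (rule finite_subset[of _ "{..sum_mset p}"]) (auto simp: columns_def dest: mem_le_sum_mset)

lemma finite_column_pairs: "finite (column_pairs p)"
  by (rule finite_subset[of _ "{..sum_mset p} \<times> {..sum_mset p}"])
     (auto simp: column_pairs_def dest!: mem_le_sum_mset)

(* The partition with distinct part sizes g1 < g1 + g2 < ... of multiplicities c1, c2, ...;
   conjugation acts on these codes as (gs, cs) \<mapsto> (rev cs, rev gs). *)
fun mset_of_gaps :: "nat list \<Rightarrow> nat list \<Rightarrow> nat multiset" where
  "mset_of_gaps (g # gs) (c # cs) = replicate_mset c g + image_mset (\<lambda>x. x + g) (mset_of_gaps gs cs)"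
| "mset_of_gaps _ _ = {#}"

definition gap_codes :: "(nat list \<times> nat list) set" where
  "gap_codes = {(gs, cs). length gs = length cs \<and> 0 \<notin> set gs \<and> 0 \<notin> set cs}"

fun cells :: "nat list \<Rightarrow> nat list \<Rightarrow> nat" where
  "cells (g # gs) (c # cs) = g * (c + sum_list cs) + cells gs cs"
| "cells _ _ = 0"

fun sym2 :: "nat list \<Rightarrow> nat" where
  "sym2 [] = 0"
| "sym2 (x # xs) = x * sum_list xs + sym2 xs"

context
  fixes c g :: nat and q :: "nat multiset"
  assumes c: "c > 0" and q: "0 \<notin># q"
begin

private abbreviation "P \<equiv> replicate_mset c g + image_mset (\<lambda>x. x + g) q"

private lemma bex_P: "(\<exists>x\<in>#P. \<phi> x) \<longleftrightarrow> \<phi> g \<or> (\<exists>y\<in>#q. \<phi> (y + g))"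
  using c by auto

private lemma sum_mset_P: "(\<Sum>x\<in>#P. h x) = c * h g + (\<Sum>y\<in>#q. h (y + g))"
  for h :: "nat \<Rightarrow> nat"
  by (simp add: image_mset.compositionality comp_def)

lemma unequal_part_pairs_step: "unequal_part_pairs P = c * size q + unequal_part_pairs q"
proof -
  have "(\<Sum>y\<in>#q. of_bool (0 < y)) = (\<Sum>y\<in>#q. 1 :: nat)"
    using q by (intro arg_cong[where f = sum_mset] image_mset_cong) (auto intro: gr0I)
  then have "(\<Sum>y\<in>#q. of_bool (0 < y)) = size q"
    by simp
  then show ?thesis
    by (simp add: unequal_part_pairs_def sum_mset_P image_mset.compositionality comp_def)
qed

lemma card_columns_step: "card (columns P) = g + card (columns q)"
proof -
  have "columns P = {1..g} \<union> (\<lambda>t. t + g) ` columns q"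
    unfolding columns_def bex_P by (auto simp: image_shift_iff Suc_le_eq le_diff_conv less_diff_conv)
  moreover have "{1..g} \<inter> (\<lambda>t. t + g) ` columns q = {}"
    by (auto simp: columns_def)
  ultimately show ?thesis
    by (simp add: card_Un_disjoint finite_columns card_image)
qed

lemma card_column_pairs_step:
  "card (column_pairs P) = g * card (columns q) + card (column_pairs q)"
proof -
  have "column_pairs P = {1..g} \<times> (\<lambda>t. t + g) ` columns q \<union> (\<lambda>(r, t). (r + g, t + g)) ` column_pairs q"
    unfolding columns_def column_pairs_def bex_P
    by (auto simp: image_shift_iff Suc_le_eq le_diff_conv less_diff_conv)
  moreover have "{1..g} \<times> (\<lambda>t. t + g) ` columns q \<inter> (\<lambda>(r, t). (r + g, t + g)) ` column_pairs q = {}"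
    by (auto simp: column_pairs_def)
  moreover have "inj_on (\<lambda>(r, t). (r + g, t + g)) (column_pairs q)"
    by (auto simp: inj_on_def)
  ultimately show ?thesis
    by (simp add: card_Un_disjoint finite_columns finite_column_pairs card_image card_cartesian_product)
qed

end

lemma Cons_in_gap_codes_iff:
  "(g # gs, c # cs) \<in> gap_codes \<longleftrightarrow> 0 < g \<and> 0 < c \<and> (gs, cs) \<in> gap_codes"
  by (auto simp: gap_codes_def)

lemma gap_codes_cases:
  assumes "(gs, cs) \<in> gap_codes"
  obtains "gs = []" "cs = []"
    | g gs' c cs' where "gs = g # gs'" "cs = c # cs'" "0 < g" "0 < c" "(gs', cs') \<in> gap_codes"
  using assms by (cases gs; cases cs) (auto simp: gap_codes_def)

lemma zero_not_in_mset_of_gaps: "(gs, cs) \<in> gap_codes \<Longrightarrow> 0 \<notin># mset_of_gaps gs cs"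
  by (induction gs cs rule: mset_of_gaps.induct) (auto simp: Cons_in_gap_codes_iff)

lemma size_mset_of_gaps: "length gs = length cs \<Longrightarrow> size (mset_of_gaps gs cs) = sum_list cs"
  by (induction gs cs rule: mset_of_gaps.induct) auto

lemma sum_mset_mset_of_gaps: "length gs = length cs \<Longrightarrow> sum_mset (mset_of_gaps gs cs) = cells gs cs"
  by (induction gs cs rule: mset_of_gaps.induct)
     (simp_all add: sum_mset_image_add size_mset_of_gaps distrib_left)

lemma unequal_part_pairs_mset_of_gaps:
  "(gs, cs) \<in> gap_codes \<Longrightarrow> unequal_part_pairs (mset_of_gaps gs cs) = sym2 cs"
proof (induction gs cs rule: mset_of_gaps.induct)
  case (1 g gs c cs)
  then show ?case
    by (simp add: Cons_in_gap_codes_iff unequal_part_pairs_step zero_not_in_mset_of_gaps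
        size_mset_of_gaps gap_codes_def)
qed (auto simp: gap_codes_def unequal_part_pairs_def)

lemma card_column_pairs_mset_of_gaps:
  "(gs, cs) \<in> gap_codes \<Longrightarrow>
     card (columns (mset_of_gaps gs cs)) = sum_list gs \<and>
     card (column_pairs (mset_of_gaps gs cs)) = sym2 gs"
proof (induction gs cs rule: mset_of_gaps.induct)
  case (1 g gs c cs)
  then show ?case
    by (simp add: Cons_in_gap_codes_iff card_columns_step card_column_pairs_step
        zero_not_in_mset_of_gaps)
qed (auto simp: gap_codes_def columns_def column_pairs_def)

lemma mset_of_gaps_Cons_decompose:
  fixes p q :: "nat multiset"
  assumes "0 < c" "0 \<notin># q" "p = replicate_mset c g + image_mset (\<lambda>x. x + g) q"
  shows "Min (set_mset p) = g" "count p g = c"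
    and "image_mset (\<lambda>x. x - g) (filter_mset (\<lambda>x. x \<noteq> g) p) = q"
proof -
  have "filter_mset (\<lambda>x. x \<noteq> g) (replicate_mset c g) = {#}"
    by simp
  moreover have "filter_mset (\<lambda>x. x + g \<noteq> g) q = q"
    using assms(2) by (auto simp: filter_mset_eq_conv intro: gr0I)
  ultimately have "filter_mset (\<lambda>x. x \<noteq> g) p = image_mset (\<lambda>x. x + g) q"
    using assms(3) by (simp add: filter_mset_image_mset)
  then show "image_mset (\<lambda>x. x - g) (filter_mset (\<lambda>x. x \<noteq> g) p) = q"
    by (simp add: image_mset.compositionality comp_def)
  show "Min (set_mset p) = g"
    using assms by (intro Min_eqI) auto
  have "count (image_mset (\<lambda>x. x + g) q) g = 0"
    using assms(2) by (auto simp: count_eq_zero_iff)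
  then show "count p g = c"
    using assms(3) by simp
qed

lemma inj_on_mset_of_gaps: "inj_on (case_prod mset_of_gaps) gap_codes"
proof -
  have "gs = gs' \<and> cs = cs'"
    if "(gs, cs) \<in> gap_codes" "(gs', cs') \<in> gap_codes" "mset_of_gaps gs cs = mset_of_gaps gs' cs'"
    for gs cs gs' cs'
    using that
  proof (induction gs arbitrary: cs gs' cs')
    case Nil
    then show ?case
      by (auto elim: gap_codes_cases)
  next
    case (Cons g gs)
    from Cons.prems(1) obtain c cs1 where cs: "cs = c # cs1" "0 < g" "0 < c" "(gs, cs1) \<in> gap_codes"
      by (auto elim: gap_codes_cases)
    from Cons.prems(2,3) cs obtain g' gs2 c' cs2 where
      cs': "gs' = g' # gs2" "cs' = c' # cs2" "0 < c'" "(gs2, cs2) \<in> gap_codes"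
      by (auto elim: gap_codes_cases)
    let ?p = "mset_of_gaps (g # gs) cs"
    have p: "?p = replicate_mset c g + image_mset (\<lambda>x. x + g) (mset_of_gaps gs cs1)"
      "?p = replicate_mset c' g' + image_mset (\<lambda>x. x + g') (mset_of_gaps gs2 cs2)"
      using Cons.prems(3) cs cs' by simp_all
    note d = mset_of_gaps_Cons_decompose[OF cs(3) zero_not_in_mset_of_gaps[OF cs(4)] p(1)]
    note d' = mset_of_gaps_Cons_decompose[OF cs'(3) zero_not_in_mset_of_gaps[OF cs'(4)] p(2)]
    have "g = g'" "c = c'" "mset_of_gaps gs cs1 = mset_of_gaps gs2 cs2"
      using d d' by metis+
    with Cons.IH[OF cs(4) cs'(4)] cs cs' show ?case
      by simp
  qed
  then show ?thesis
    by (auto intro!: inj_onI)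
qed

lemma mset_of_gaps_surj:
  "0 \<notin># p \<Longrightarrow> \<exists>gs cs. (gs, cs) \<in> gap_codes \<and> mset_of_gaps gs cs = p"
proof (induction "size p" arbitrary: p rule: less_induct)
  case less
  show ?case
  proof (cases "p = {#}")
    case True
    then show ?thesis
      by (intro exI[of _ "[]"]) (simp add: gap_codes_def)
  next
    case False
    define g where "g = Min (set_mset p)"
    define c where "c = count p g"
    define q where "q = image_mset (\<lambda>x. x - g) (filter_mset (\<lambda>x. x \<noteq> g) p)"
    have "g \<in># p"
      using False by (simp add: g_def)
    then have "0 < g" "0 < c"
      using less.prems by (auto simp: c_def intro: gr0I)
    have above: "g < x" if "x \<in># p" "x \<noteq> g" for x
      using that by (auto simp: g_def order.not_eq_order_implies_strict)
    have "0 \<notin># q"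
    proof
      assume "0 \<in># q"
      then obtain x where "x \<in># p" "x \<noteq> g" "x \<le> g"
        by (auto simp: q_def)
      with above show False
        by (meson leD)
    qed
    have shift_back: "image_mset (\<lambda>x. x + g) q = image_mset id (filter_mset (\<lambda>x. x \<noteq> g) p)"
      unfolding q_def image_mset.compositionality
    proof (rule image_mset_cong)
      fix x assume "x \<in># filter_mset (\<lambda>x. x \<noteq> g) p"
      then have "x \<in># p" "x \<noteq> g"
        by simp_all
      then have "g < x"
        by (rule above)
      then show "((\<lambda>x. x + g) \<circ> (\<lambda>x. x - g)) x = id x"
        by (simp add: less_imp_le)
    qed
    have "p = filter_mset (\<lambda>x. x \<noteq> g) p + filter_mset (\<lambda>x. \<not> x \<noteq> g) p"
      by (rule multiset_partition)
    also have "\<dots> = replicate_mset c g + image_mset (\<lambda>x. x + g) q"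
      by (simp add: shift_back c_def filter_eq_replicate_mset add.commute)
    finally have p: "p = replicate_mset c g + image_mset (\<lambda>x. x + g) q" .
    have "size q < size p"
      using \<open>0 < c\<close> by (subst p) simp
    then obtain gs cs where "(gs, cs) \<in> gap_codes" "mset_of_gaps gs cs = q"
      using less.hyps \<open>0 \<notin># q\<close> by blast
    with p \<open>0 < g\<close> \<open>0 < c\<close> show ?thesis
      by (intro exI[of _ "g # gs"] exI[of _ "c # cs"]) (simp add: Cons_in_gap_codes_iff)
  qed
qed

lemma bij_betw_mset_of_gaps:
  "bij_betw (case_prod mset_of_gaps) {(gs, cs) \<in> gap_codes. cells gs cs = m} (partitions m)"
proof (rule bij_betw_imageI)
  show "inj_on (case_prod mset_of_gaps) {(gs, cs) \<in> gap_codes. cells gs cs = m}"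
    by (rule inj_on_subset[OF inj_on_mset_of_gaps]) auto
  have partition: "mset_of_gaps gs cs \<in> partitions (cells gs cs)" if "(gs, cs) \<in> gap_codes" for gs cs
    using that zero_not_in_mset_of_gaps[OF that]
    by (auto simp: partitions_def gap_codes_def sum_mset_mset_of_gaps intro: gr0I)
  show "case_prod mset_of_gaps ` {(gs, cs) \<in> gap_codes. cells gs cs = m} = partitions m"
  proof (intro equalityI subsetI)
    fix p assume "p \<in> case_prod mset_of_gaps ` {(gs, cs) \<in> gap_codes. cells gs cs = m}"
    then show "p \<in> partitions m"
      using partition by auto
  next
    fix p assume p: "p \<in> partitions m"
    then have "0 \<notin># p"
      by (auto simp: partitions_def)
    then obtain gs cs where "(gs, cs) \<in> gap_codes" "mset_of_gaps gs cs = p"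
      using mset_of_gaps_surj by blast
    with p partition show "p \<in> case_prod mset_of_gaps ` {(gs, cs) \<in> gap_codes. cells gs cs = m}"
      by (force simp: partitions_def)
  qed
qed

lemma cells_snoc:
  "length gs = length cs \<Longrightarrow> cells (gs @ [g]) (cs @ [c]) = cells gs cs + (sum_list gs + g) * c"
  by (induction gs cs rule: cells.induct) (auto simp: algebra_simps)

lemma cells_rev_swap: "length gs = length cs \<Longrightarrow> cells (rev cs) (rev gs) = cells gs cs"
proof (induction gs arbitrary: cs)
  case (Cons g gs)
  then obtain c cs' where "cs = c # cs'"
    by (cases cs) auto
  with Cons show ?case
    by (simp add: cells_snoc algebra_simps)
qed simp

lemma sym2_snoc: "sym2 (xs @ [y]) = sym2 xs + sum_list xs * y"
  by (induction xs) (auto simp: algebra_simps)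

lemma sym2_rev: "sym2 (rev xs) = sym2 xs"
  by (induction xs) (auto simp: sym2_snoc algebra_simps)

lemma bij_betw_rev_swap:
  "bij_betw (\<lambda>(gs, cs). (rev cs, rev gs)) {(gs, cs) \<in> gap_codes. cells gs cs = m}
     {(gs, cs) \<in> gap_codes. cells gs cs = m}"
  by (rule bij_betw_byWitness[where f' = "\<lambda>(gs, cs). (rev cs, rev gs)"])
     (auto simp: gap_codes_def cells_rev_swap)

theorem sum_unequal_part_pairs_eq_sum_card_column_pairs:
  "(\<Sum>p\<in>partitions m. unequal_part_pairs p) = (\<Sum>p\<in>partitions m. card (column_pairs p))"
proof -
  let ?C = "{(gs, cs) \<in> gap_codes. cells gs cs = m}"
  have "(\<Sum>p\<in>partitions m. unequal_part_pairs p) = (\<Sum>(gs, cs)\<in>?C. sym2 cs)"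
    by (auto simp: sum.reindex_bij_betw[OF bij_betw_mset_of_gaps, symmetric]
        unequal_part_pairs_mset_of_gaps intro!: sum.cong)
  also have "\<dots> = (\<Sum>(gs, cs)\<in>?C. sym2 (rev gs))"
    by (subst sum.reindex_bij_betw[OF bij_betw_rev_swap, symmetric]) (simp add: case_prod_unfold)
  also have "\<dots> = (\<Sum>p\<in>partitions m. card (column_pairs p))"
    by (auto simp: sum.reindex_bij_betw[OF bij_betw_mset_of_gaps, symmetric]
        card_column_pairs_mset_of_gaps sym2_rev intro!: sum.cong)
  finally show ?thesis .
qed

section \<open>The generating functions\<close>

definition increasing_pairs :: "nat \<Rightarrow> (nat \<times> nat) set" where
  "increasing_pairs N = {(b, a). 1 \<le> b \<and> b < a \<and> a \<le> N}"

lemma finite_increasing_pairs: "finite (increasing_pairs N)"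
  by (rule finite_subset[of _ "{..N} \<times> {..N}"]) (auto simp: increasing_pairs_def)

lemma unequal_part_pairs_eq_sum_increasing_pairs:
  assumes "set_mset p \<subseteq> {1..N}"
  shows "int (unequal_part_pairs p) = (\<Sum>(b, a)\<in>increasing_pairs N. int (count p b) * int (count p a))"
proof -
  have pairs: "{1..N} \<times> {1..N} \<inter> {(b, a). b < a} = increasing_pairs N"
    by (auto simp: increasing_pairs_def)
  have "int (unequal_part_pairs p) = (\<Sum>x\<in>#p. \<Sum>y\<in>#p. of_bool (x < y))"
    by (simp add: unequal_part_pairs_def of_nat_sum_mset image_mset.compositionality comp_def)
  also have "\<dots> = (\<Sum>b\<in>{1..N}. \<Sum>a\<in>{1..N}. int (count p b) * (int (count p a) * of_bool (b < a)))"
    by (simp only: sum_mset_eq_sum_count[OF finite_atLeastAtMost assms] sum_distrib_left)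
  also have "\<dots> = (\<Sum>(b, a)\<in>{1..N} \<times> {1..N}. int (count p b) * int (count p a) * of_bool (b < a))"
    by (simp add: sum.cartesian_product mult.assoc)
  also have "\<dots> = (\<Sum>(b, a)\<in>increasing_pairs N. int (count p b) * int (count p a))"
    using pairs by (simp add: case_prod_unfold)
  finally show ?thesis .
qed

definition partition_series :: "nat \<Rightarrow> int fps" where
  "partition_series N = part_product {1..N} (\<lambda>_. geometric)"

definition two_sizes_series :: "nat \<Rightarrow> int fps" where
  "two_sizes_series N = (\<Sum>(b, a)\<in>increasing_pairs N. part_product {b, a} (\<lambda>_. fps_X * geometric))"

lemma partition_series_mult_two_sizes_series_nth:
  assumes "m \<le> N"
  shows "fps_nth (partition_series N * two_sizes_series N) m
    = (\<Sum>p\<in>partitions m. int (unequal_part_pairs p))"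
proof -
  have pair: "fps_nth (partition_series N * part_product {b, a} (\<lambda>_. fps_X * geometric)) m
      = (\<Sum>p\<in>partitions m. int (count p b) * int (count p a))"
    if "(b, a) \<in> increasing_pairs N" for b a
  proof -
    have ba: "{b, a} \<subseteq> {1..N}" "b \<noteq> a"
      using that by (auto simp: increasing_pairs_def)
    have "(\<Prod>j\<in>{1..N}. fps_nth (geometric * (if j \<in> {b, a} then fps_X * geometric else 1)) (count p j))
        = (\<Prod>j\<in>{1..N}. if j \<in> {b, a} then int (count p j) else 1)" for p
      by (intro prod.cong) (auto simp: fps_nth_geometric_mult_X_mult_geometric)
    also have "(\<Prod>j\<in>{1..N}. if j \<in> {b, a} then int (count p j) else 1) = (\<Prod>j\<in>{b, a}. int (count p j))" for p
      using prod.inter_restrict[of "{1..N}" "\<lambda>j. int (count p j)" "{b, a}"] ba(1)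
      by (simp only: Int_absorb1 finite_atLeastAtMost)
    finally have weight: "(\<Prod>j\<in>{1..N}.
        fps_nth (geometric * (if j \<in> {b, a} then fps_X * geometric else 1)) (count p j))
        = int (count p b) * int (count p a)" for p
      using ba(2) by simp
    have "partition_series N * part_product {b, a} (\<lambda>_. fps_X * geometric)
        = part_product {1..N} (\<lambda>j. geometric * (if j \<in> {b, a} then fps_X * geometric else 1))"
      unfolding partition_series_def using ba(1) by (rule part_product_mult_subset) auto
    then show ?thesis
      by (simp only: part_product_atLeastAtMost_nth[OF assms] weight)
  qed
  have "fps_nth (partition_series N * two_sizes_series N) m
      = (\<Sum>(b, a)\<in>increasing_pairs N. \<Sum>p\<in>partitions m. int (count p b) * int (count p a))"
    using pair by (simp add: two_sizes_series_def sum_distrib_left fps_sum_nth case_prod_unfold)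
  also have "\<dots> = (\<Sum>p\<in>partitions m. \<Sum>(b, a)\<in>increasing_pairs N. int (count p b) * int (count p a))"
    by (subst sum.swap) (simp add: case_prod_unfold)
  also have "\<dots> = (\<Sum>p\<in>partitions m. int (unequal_part_pairs p))"
    using assms by (intro sum.cong refl unequal_part_pairs_eq_sum_increasing_pairs[symmetric]
        set_mset_partition_subset)
  finally show ?thesis .
qed

definition distinct_series :: "nat set \<Rightarrow> int fps" where
  "distinct_series S = part_product S (\<lambda>_. 1 - fps_X)"

definition signed_series :: "nat \<Rightarrow> int fps" where
  "signed_series N = (\<Sum>(r, t)\<in>increasing_pairs N.
     distinct_series {r..N} - distinct_series {r..<t} - distinct_series {t..N} + 1)"

lemma partition_series_mult_distinct_series_nth:
  assumes "m \<le> N" "S \<subseteq> {1..N}"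
  shows "fps_nth (partition_series N * distinct_series S) m
    = (\<Sum>p\<in>partitions m. of_bool (set_mset p \<inter> S = {}))"
proof -
  have weight: "(\<Prod>j\<in>{1..N}. fps_nth (geometric * (if j \<in> S then 1 - fps_X else 1)) (count p j))
      = of_bool (set_mset p \<inter> S = {})" for p
  proof -
    have "(\<Prod>j\<in>{1..N}. fps_nth (geometric * (if j \<in> S then 1 - fps_X else 1)) (count p j))
        = (\<Prod>j\<in>{1..N}. of_bool (j \<in> S \<longrightarrow> count p j = 0))"
      by (intro prod.cong) (simp_all add: geometric_mult_one_minus_X)
    also have "\<dots> = of_bool (\<forall>j\<in>{1..N}. j \<in> S \<longrightarrow> count p j = 0)"
      by (rule prod_of_bool) simp
    also have "(\<forall>j\<in>{1..N}. j \<in> S \<longrightarrow> count p j = 0) \<longleftrightarrow> set_mset p \<inter> S = {}"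
      using assms(2) by (auto simp: count_eq_zero_iff)
    finally show ?thesis .
  qed
  have "partition_series N * distinct_series S
      = part_product {1..N} (\<lambda>j. geometric * (if j \<in> S then 1 - fps_X else 1))"
    unfolding partition_series_def distinct_series_def using assms(2)
    by (rule part_product_mult_subset) auto
  then show ?thesis
    by (simp only: part_product_atLeastAtMost_nth[OF assms(1)] weight)
qed

lemma column_pair_inclusion_exclusion:
  assumes "set_mset p \<subseteq> {1..N}" "(r, t) \<in> increasing_pairs N"
  shows "of_bool (set_mset p \<inter> {r..N} = {}) - of_bool (set_mset p \<inter> {r..<t} = {})
           - of_bool (set_mset p \<inter> {t..N} = {}) + 1 = (of_bool ((r, t) \<in> column_pairs p) :: int)"
proof -
  have bounded: "x \<le> N" if "x \<in># p" for x
    using assms(1) that by auto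
  have "{r..N} = {r..<t} \<union> {t..N}"
    using assms(2) by (auto simp: increasing_pairs_def)
  then have "set_mset p \<inter> {r..N} = {} \<longleftrightarrow> set_mset p \<inter> {r..<t} = {} \<and> set_mset p \<inter> {t..N} = {}"
    by auto
  moreover have "(r, t) \<in> column_pairs p \<longleftrightarrow> set_mset p \<inter> {r..<t} \<noteq> {} \<and> set_mset p \<inter> {t..N} \<noteq> {}"
    using assms(2) bounded by (auto simp: column_pairs_def increasing_pairs_def)
  ultimately show ?thesis
    by auto
qed

lemma column_pairs_subset: "set_mset p \<subseteq> {1..N} \<Longrightarrow> column_pairs p \<subseteq> increasing_pairs N"
  by (auto simp: column_pairs_def increasing_pairs_def)

lemma partition_series_mult_signed_series_nth:
  assumes "m \<le> N"
  shows "fps_nth (partition_series N * signed_series N) m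
    = (\<Sum>p\<in>partitions m. int (card (column_pairs p)))"
proof -
  let ?avoid = "\<lambda>S p. of_bool (set_mset p \<inter> S = {}) :: int"
  have all: "fps_nth (partition_series N) m = (\<Sum>p\<in>partitions m. ?avoid {} p)"
    using partition_series_mult_distinct_series_nth[OF assms, of "{}"]
    by (simp add: distinct_series_def part_product_def)
  have pair: "fps_nth (partition_series N *
        (distinct_series {r..N} - distinct_series {r..<t} - distinct_series {t..N} + 1)) m
      = (\<Sum>p\<in>partitions m. ?avoid {r..N} p - ?avoid {r..<t} p - ?avoid {t..N} p + ?avoid {} p)"
    if "(r, t) \<in> increasing_pairs N" for r t
  proof -
    have "{r..N} \<subseteq> {1..N}" "{r..<t} \<subseteq> {1..N}" "{t..N} \<subseteq> {1..N}"
      using that by (auto simp: increasing_pairs_def)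
    with assms all show ?thesis
      by (simp add: distrib_left right_diff_distrib partition_series_mult_distinct_series_nth
          sum_subtractf sum.distrib)
  qed
  have "fps_nth (partition_series N * signed_series N) m
      = (\<Sum>(r, t)\<in>increasing_pairs N. \<Sum>p\<in>partitions m.
           ?avoid {r..N} p - ?avoid {r..<t} p - ?avoid {t..N} p + ?avoid {} p)"
    unfolding signed_series_def sum_distrib_left fps_sum_nth
    by (intro sum.cong refl) (auto simp: pair)
  also have "\<dots> = (\<Sum>p\<in>partitions m. \<Sum>(r, t)\<in>increasing_pairs N.
           ?avoid {r..N} p - ?avoid {r..<t} p - ?avoid {t..N} p + ?avoid {} p)"
    by (subst sum.swap) (simp add: case_prod_unfold)
  also have "\<dots> = (\<Sum>p\<in>partitions m. \<Sum>rt\<in>increasing_pairs N. of_bool (rt \<in> column_pairs p))"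
    using column_pair_inclusion_exclusion set_mset_partition_subset[OF _ assms]
    by (intro sum.cong refl) auto
  also have "\<dots> = (\<Sum>p\<in>partitions m. int (card (column_pairs p)))"
    using column_pairs_subset set_mset_partition_subset[OF _ assms]
    by (intro sum.cong refl) (simp add: finite_increasing_pairs Int_absorb1)
  finally show ?thesis .
qed

lemma distinct_series_mult_partition_series: "distinct_series {1..N} * partition_series N = 1"
proof -
  have "distinct_series {1..N} * partition_series N = part_product {1..N} (\<lambda>_. (1 - fps_X) * geometric)"
    by (simp add: distinct_series_def partition_series_def part_product_mult)
  also have "\<dots> = 1"
    by (simp add: part_product_def geometric_mult_one_minus_X mult.commute)
  finally show ?thesis .
qed

section \<open>The coefficients of $q^n$\<close>

lemma sum_increasing_pairs_doubleton:
  assumes "A \<subseteq> {1..N}"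
  shows "(\<Sum>(b, a)\<in>increasing_pairs N. of_bool (A = {b, a})) = (of_bool (card A = 2) :: int)"
proof -
  have "{ba \<in> increasing_pairs N. A = {fst ba, snd ba}} = (if card A = 2 then {(Min A, Max A)} else {})"
  proof (cases "card A = 2")
    case True
    then obtain u v where A: "A = {u, v}" "u < v"
      by (auto simp: card_2_iff elim!: linorder_neqE_nat)
    then have "u \<in> {1..N}" "v \<in> {1..N}"
      using assms by auto
    with A True show ?thesis
      by (auto simp: increasing_pairs_def doubleton_eq_iff)
  next
    case False
    then show ?thesis
      by (auto simp: increasing_pairs_def)
  qed
  then show ?thesis
    by (simp add: case_prod_unfold finite_increasing_pairs Int_def)
qed

lemma part_product_X_mult_geometric_nth:
  assumes "0 < b" "b < a"
  shows "fps_nth (part_product {b, a} (\<lambda>_. fps_X * geometric)) n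
    = int (card {p \<in> partitions n. set_mset p = {b, a}})"
proof -
  have fin: "finite {b, a}" "0 \<notin> {b, a}"
    using assms by auto
  have "fps_nth (part_product {b, a} (\<lambda>_. fps_X * geometric)) n
      = (\<Sum>p\<in>partitions_in {b, a} n. \<Prod>j\<in>{b, a}. of_bool (0 < count p j))"
    by (simp only: part_product_nth[OF fin] fps_nth_X_mult_geometric)
  also have "\<dots> = (\<Sum>p\<in>partitions_in {b, a} n. of_bool (\<forall>j\<in>{b, a}. 0 < count p j))"
    by (simp only: prod_of_bool[OF fin(1)])
  also have "\<dots> = int (card (partitions_in {b, a} n \<inter> {p. \<forall>j\<in>{b, a}. 0 < count p j}))"
    by (intro sum_of_bool_eq finite_partitions_in fin)
  also have "partitions_in {b, a} n \<inter> {p. \<forall>j\<in>{b, a}. 0 < count p j}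
      = {p \<in> partitions n. set_mset p = {b, a}}"
    using assms by (auto simp: partitions_in_def partitions_def)
  finally show ?thesis .
qed

lemma two_sizes_series_nth:
  assumes "n \<le> N"
  shows "fps_nth (two_sizes_series N) n = int (p2 n)"
proof -
  have "fps_nth (two_sizes_series N) n
      = (\<Sum>(b, a)\<in>increasing_pairs N. \<Sum>p\<in>partitions n. of_bool (set_mset p = {b, a}))"
    unfolding two_sizes_series_def fps_sum_nth
    by (intro sum.cong refl) (auto simp: increasing_pairs_def part_product_X_mult_geometric_nth
        finite_partitions Int_def)
  also have "\<dots> = (\<Sum>p\<in>partitions n. \<Sum>(b, a)\<in>increasing_pairs N. of_bool (set_mset p = {b, a}))"
    by (subst sum.swap) (simp add: case_prod_unfold)
  also have "\<dots> = (\<Sum>p\<in>partitions n. of_bool (card (set_mset p) = 2))"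
    using assms by (intro sum.cong refl sum_increasing_pairs_doubleton set_mset_partition_subset)
  also have "\<dots> = int (p2 n)"
    by (simp add: p2_def finite_partitions Int_def)
  finally show ?thesis .
qed

lemma distinct_series_nth:
  assumes "finite S" "0 \<notin> S"
  shows "fps_nth (distinct_series S) n
    = (\<Sum>p\<in>distinct_partitions n. of_bool (set_mset p \<subseteq> S) * (-1) ^ num_parts p)"
proof -
  let ?distinct = "\<lambda>p. \<forall>x. count p x \<le> 1"
  have weight: "(\<Prod>j\<in>S. fps_nth (1 - fps_X :: int fps) (count p j))
      = of_bool (?distinct p) * (-1) ^ size p"
    if "set_mset p \<subseteq> S" for p
  proof -
    have "(\<Prod>j\<in>S. fps_nth (1 - fps_X) (count p j))
        = (\<Prod>j\<in>S. of_bool (count p j \<le> 1)) * (\<Prod>j\<in>S. (-1) ^ count p j :: int)"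
      by (simp only: fps_nth_one_minus_X prod.distrib)
    also have "(\<Prod>j\<in>S. of_bool (count p j \<le> 1)) = (of_bool (?distinct p) :: int)"
      using that by (simp add: prod_of_bool[OF assms(1)]) (metis count_eq_zero_iff le0 subsetD)
    also have "(\<Prod>j\<in>S. (-1) ^ count p j :: int) = (-1) ^ size p"
      using sum_mset_eq_sum_count[OF assms(1) that, of "\<lambda>_. 1 :: nat"]
      by (simp add: power_sum)
    finally show ?thesis .
  qed
  have "fps_nth (distinct_series S) n = (\<Sum>p\<in>partitions_in S n. of_bool (?distinct p) * (-1) ^ size p)"
    unfolding distinct_series_def part_product_nth[OF assms]
    by (intro sum.cong refl weight) (simp add: partitions_in_def)
  also have "partitions_in S n = partitions n \<inter> {p. set_mset p \<subseteq> S}"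
    using assms(2) by (auto simp: partitions_in_def partitions_def intro: gr0I)
  also have "(\<Sum>p\<in>partitions n \<inter> {p. set_mset p \<subseteq> S}. of_bool (?distinct p) * (-1) ^ size p)
      = (\<Sum>p\<in>partitions n \<inter> {p. ?distinct p}. of_bool (set_mset p \<subseteq> S) * (-1) ^ size p :: int)"
    by (simp add: finite_partitions flip: sum_of_bool_mult_eq) (simp add: mult.left_commute)
  finally show ?thesis
    by (simp add: distinct_partitions_def num_parts_def Int_def)
qed

lemma sum_increasing_pairs_smallest_largest:
  assumes "set_mset p \<subseteq> {1..N}" "p \<noteq> {#}"
  shows "(\<Sum>(r, t)\<in>increasing_pairs N. of_bool (set_mset p \<subseteq> {r..N}) - of_bool (set_mset p \<subseteq> {r..<t})
            - of_bool (set_mset p \<subseteq> {t..N}))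
       = int (smallest_part p) * (int (largest_part p) - int (smallest_part p))"
proof -
  define s where "s = smallest_part p"
  define l where "l = largest_part p"
  have ne: "set_mset p \<noteq> {}"
    using assms(2) by simp
  have s: "set_mset p \<subseteq> {r..M} \<longleftrightarrow> r \<le> s" if "M \<ge> N" for r M
    using assms(1) that by (auto simp: s_def smallest_part_def Min_ge_iff[OF finite_set_mset ne])
  have sl: "set_mset p \<subseteq> {r..<t} \<longleftrightarrow> r \<le> s \<and> l < t" for r t
    by (auto simp: s_def l_def smallest_part_def largest_part_def
        Min_ge_iff[OF finite_set_mset ne] Max_less_iff[OF finite_set_mset ne])
  have "1 \<le> s" "s \<le> l" "l \<le> N"
    using assms(1) Min_in[OF finite_set_mset ne] Max_in[OF finite_set_mset ne]
      Min_le[OF finite_set_mset Max_in[OF finite_set_mset ne]]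
    by (auto simp: s_def l_def smallest_part_def largest_part_def)
  have "(\<Sum>(r, t)\<in>increasing_pairs N. of_bool (set_mset p \<subseteq> {r..N}) - of_bool (set_mset p \<subseteq> {r..<t})
            - of_bool (set_mset p \<subseteq> {t..N}))
      = (\<Sum>(r, t)\<in>increasing_pairs N. of_bool (r \<le> s \<and> s < t \<and> t \<le> l) :: int)"
    using \<open>s \<le> l\<close> by (intro sum.cong refl) (auto simp: s sl increasing_pairs_def)
  also have "\<dots> = int (card ({1..s} \<times> {s<..l}))"
  proof -
    have "increasing_pairs N \<inter> {rt. fst rt \<le> s \<and> s < snd rt \<and> snd rt \<le> l} = {1..s} \<times> {s<..l}"
      using \<open>1 \<le> s\<close> \<open>l \<le> N\<close> by (auto simp: increasing_pairs_def)
    then show ?thesis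
      by (simp add: case_prod_unfold finite_increasing_pairs)
  qed
  also have "\<dots> = int s * (int l - int s)"
    using \<open>s \<le> l\<close> by (simp add: of_nat_diff)
  finally show ?thesis
    by (simp add: s_def l_def)
qed

lemma signed_series_nth:
  assumes "0 < n"
  shows "fps_nth (signed_series n) n = (\<Sum>p\<in>distinct_partitions n. (-1) ^ num_parts p
           * int (smallest_part p) * (int (largest_part p) - int (smallest_part p)))"
proof -
  let ?inside = "\<lambda>S p. of_bool (set_mset p \<subseteq> S) :: int"
  let ?c = "\<lambda>r t p. ?inside {r..n} p - ?inside {r..<t} p - ?inside {t..n} p"
  have pair: "fps_nth (distinct_series {r..n} - distinct_series {r..<t} - distinct_series {t..n} + 1) n
      = (\<Sum>p\<in>distinct_partitions n. ?c r t p * (-1) ^ num_parts p)"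
    if "(r, t) \<in> increasing_pairs n" for r t
  proof -
    have "0 \<notin> {r..n}" "0 \<notin> {r..<t}" "0 \<notin> {t..n}"
      using that by (auto simp: increasing_pairs_def)
    with assms show ?thesis
      by (simp add: distinct_series_nth sum_subtractf left_diff_distrib)
  qed
  have "fps_nth (signed_series n) n
      = (\<Sum>(r, t)\<in>increasing_pairs n. \<Sum>p\<in>distinct_partitions n. ?c r t p * (-1) ^ num_parts p)"
    unfolding signed_series_def fps_sum_nth
  proof (intro sum.cong refl, clarify)
    fix r t assume "(r, t) \<in> increasing_pairs n"
    then show "fps_nth (distinct_series {r..n} - distinct_series {r..<t} - distinct_series {t..n} + 1) n
        = (\<Sum>p\<in>distinct_partitions n. ?c r t p * (-1) ^ num_parts p)"
      by (rule pair)
  qed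
  also have "\<dots> = (\<Sum>p\<in>distinct_partitions n. \<Sum>(r, t)\<in>increasing_pairs n. (-1) ^ num_parts p * ?c r t p)"
    by (subst sum.swap) (simp add: case_prod_unfold mult.commute)
  also have "\<dots> = (\<Sum>p\<in>distinct_partitions n. (-1) ^ num_parts p * (\<Sum>(r, t)\<in>increasing_pairs n. ?c r t p))"
    by (simp add: sum_distrib_left case_prod_unfold)
  also have "\<dots> = (\<Sum>p\<in>distinct_partitions n. (-1) ^ num_parts p
           * int (smallest_part p) * (int (largest_part p) - int (smallest_part p)))"
  proof (intro sum.cong refl)
    fix p assume "p \<in> distinct_partitions n"
    then have "set_mset p \<subseteq> {1..n}" "p \<noteq> {#}"
      using assms set_mset_partition_subset[of p n n]
      by (auto simp: distinct_partitions_def partitions_def)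
    then show "(-1) ^ num_parts p * (\<Sum>(r, t)\<in>increasing_pairs n. ?c r t p)
        = (-1) ^ num_parts p * int (smallest_part p) * (int (largest_part p) - int (smallest_part p))"
      by (simp add: sum_increasing_pairs_smallest_largest mult.assoc)
  qed
  finally show ?thesis .
qed

theorem corollary2p7:
  fixes n :: nat
  assumes "n > 0"
  shows "int (p2 n) =
    (\<Sum>p\<in>distinct_partitions n. (-1) ^ num_parts p
        * int (smallest_part p) * (int (largest_part p) - int (smallest_part p)))"
proof -
  have "fps_nth (partition_series n * two_sizes_series n) m
      = fps_nth (partition_series n * signed_series n) m"
    if "m \<le> n" for m
    using that
    by (simp only: partition_series_mult_two_sizes_series_nth partition_series_mult_signed_series_nth
        of_nat_sum[symmetric] sum_unequal_part_pairs_eq_sum_card_column_pairs)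
  then have "fps_nth (two_sizes_series n) n = fps_nth (signed_series n) n"
    by (rule fps_nth_eq_cancel_invertible[OF distinct_series_mult_partition_series])
  then show ?thesis
    using assms by (simp add: two_sizes_series_nth signed_series_nth)
qed

end
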